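(* Let $G=(V,E)$ be a finite connected non-bipartite graph such that the signed graph $(G,\sigma_-)$ with the all-negative sign $\sigma_-\equiv-1$ satisfies $CD^{\sigma_-}(0,N)$ for some $N\in(1,\infty]$. Let $\lambda_{|V|}$ be the largest eigenvalue of the graph Laplacian $\Delta$. Then \[ 2-\lambda_{|V|}\geq \frac{1}{4\left(1+\sqrt{(N-1)/N}\right)}\cdot\frac{1}{d(D+1)\lceil (D+1)/2\rceil}, \] where $d$ is the maximal vertex degree, $D$ the diameter of $G$, and $\sqrt{(N-1)/N}:=1$ when $N=\infty$.
   Context: $G$ is a finite simple connected graph with degrees $d_x$. For a sign $\sigma:E\to\{\pm1\}$ ($\sigma_{xy}=\sigma(\{x,y\})$) the signed Laplacian is $\Delta^{\sigma}f(x)=\frac{1}{d_x}\sum_{y\sim x}(\sigma_{xy}f(y)-f(x))$; $\Delta$ is the case $\sigma\equiv+1$, whose eigenvalues ($-\Delta f=\lambda f$) are $0=\lambda_1<\lambda_2\le\dots\le\lambda_{|V|}\le 2$. $\Gamma^{\sigma}(f,g)=\frac12\{\Delta(fg)-g\Delta^{\sigma}f-f\Delta^{\sigma}g\}$, $\Gamma_2^{\sigma}(f,g)=\frac12\{\Delta\Gamma^{\sigma}(f,g)-\Gamma^{\sigma}(g,\Delta^{\sigma}f)-\Gamma^{\sigma}(f,\Delta^{\sigma}g)\}$. $CD^{\sigma}(K,N)$ means $\Gamma_2^{\sigma}(f,f)(x)\ge\frac1N(\Delta^\sigma f)^2(x)+K\Gamma^\sigma(f,f)(x)$ for all $f:V\to\mathbb{R}$,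 $x\in V$ ($\frac1N=0$ if $N=\infty$). $\lceil\cdot\rceil$ is the ceiling. *)

theory Defs
  imports Complex_Main "HOL-Library.Extended_Real"
begin

definition simple_graph :: "'a set \<Rightarrow> ('a \<Rightarrow> 'a \<Rightarrow> bool) \<Rightarrow> bool" where
  "simple_graph V E \<longleftrightarrow> finite V \<and> (\<forall>x y. E x y \<longrightarrow> x \<in> V \<and> y \<in> V)
     \<and> (\<forall>x y. E x y \<longrightarrow> E y x) \<and> (\<forall>x. \<not> E x x)"

definition edge_rel :: "'a set \<Rightarrow> ('a \<Rightarrow> 'a \<Rightarrow> bool) \<Rightarrow> ('a \<times> 'a) set" where
  "edge_rel V E = {(x, y). x \<in> V \<and> y \<in> V \<and> E x y}"

definition connected_graph :: "'a set \<Rightarrow> ('a \<Rightarrow> 'a \<Rightarrow> bool) \<Rightarrow> bool" where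
  "connected_graph V E \<longleftrightarrow> V \<noteq> {} \<and> (\<forall>x\<in>V. \<forall>y\<in>V. (x, y) \<in> (edge_rel V E)\<^sup>*)"

definition bipartite :: "'a set \<Rightarrow> ('a \<Rightarrow> 'a \<Rightarrow> bool) \<Rightarrow> bool" where
  "bipartite V E \<longleftrightarrow> (\<exists>c :: 'a \<Rightarrow> bool. \<forall>x\<in>V. \<forall>y\<in>V. E x y \<longrightarrow> c x \<noteq> c y)"

definition nbrs :: "'a set \<Rightarrow> ('a \<Rightarrow> 'a \<Rightarrow> bool) \<Rightarrow> 'a \<Rightarrow> 'a set" where
  "nbrs V E x = {y \<in> V. E x y}"

definition deg :: "'a set \<Rightarrow> ('a \<Rightarrow> 'a \<Rightarrow> bool) \<Rightarrow> 'a \<Rightarrow> nat" where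
  "deg V E x = card (nbrs V E x)"

definition max_degree :: "'a set \<Rightarrow> ('a \<Rightarrow> 'a \<Rightarrow> bool) \<Rightarrow> nat" where
  "max_degree V E = Max (deg V E ` V)"

definition gdist :: "'a set \<Rightarrow> ('a \<Rightarrow> 'a \<Rightarrow> bool) \<Rightarrow> 'a \<Rightarrow> 'a \<Rightarrow> nat" where
  "gdist V E x y = (LEAST n. (x, y) \<in> (edge_rel V E) ^^ n)"

definition diameter :: "'a set \<Rightarrow> ('a \<Rightarrow> 'a \<Rightarrow> bool) \<Rightarrow> nat" where
  "diameter V E = Max {gdist V E x y | x y. x \<in> V \<and> y \<in> V}"

definition sgn_laplacian :: "'a set \<Rightarrow> ('a \<Rightarrow> 'a \<Rightarrow> bool) \<Rightarrow> ('a \<Rightarrow> 'a \<Rightarrow> real)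
    \<Rightarrow> ('a \<Rightarrow> real) \<Rightarrow> 'a \<Rightarrow> real" where
  "sgn_laplacian V E \<sigma> f x = (1 / real (deg V E x)) * (\<Sum>y\<in>nbrs V E x. \<sigma> x y * f y - f x)"

definition laplacian :: "'a set \<Rightarrow> ('a \<Rightarrow> 'a \<Rightarrow> bool) \<Rightarrow> ('a \<Rightarrow> real) \<Rightarrow> 'a \<Rightarrow> real" where
  "laplacian V E = sgn_laplacian V E (\<lambda>_ _. 1)"

definition Gamma :: "'a set \<Rightarrow> ('a \<Rightarrow> 'a \<Rightarrow> bool) \<Rightarrow> ('a \<Rightarrow> 'a \<Rightarrow> real)
    \<Rightarrow> ('a \<Rightarrow> real) \<Rightarrow> ('a \<Rightarrow> real) \<Rightarrow> 'a \<Rightarrow> real" where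
  "Gamma V E \<sigma> f g x = (1/2) * (laplacian V E (\<lambda>z. f z * g z) x
      - g x * sgn_laplacian V E \<sigma> f x - f x * sgn_laplacian V E \<sigma> g x)"

definition Gamma2 :: "'a set \<Rightarrow> ('a \<Rightarrow> 'a \<Rightarrow> bool) \<Rightarrow> ('a \<Rightarrow> 'a \<Rightarrow> real)
    \<Rightarrow> ('a \<Rightarrow> real) \<Rightarrow> ('a \<Rightarrow> real) \<Rightarrow> 'a \<Rightarrow> real" where
  "Gamma2 V E \<sigma> f g x = (1/2) * (laplacian V E (Gamma V E \<sigma> f g) x
      - Gamma V E \<sigma> g (sgn_laplacian V E \<sigma> f) x - Gamma V E \<sigma> f (sgn_laplacian V E \<sigma> g) x)"

definition recip_dim :: "ereal \<Rightarrow> real" where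
  "recip_dim N = (if N = \<infinity> then 0 else 1 / real_of_ereal N)"

definition CD :: "'a set \<Rightarrow> ('a \<Rightarrow> 'a \<Rightarrow> bool) \<Rightarrow> ('a \<Rightarrow> 'a \<Rightarrow> real) \<Rightarrow> real \<Rightarrow> ereal \<Rightarrow> bool" where
  "CD V E \<sigma> K N \<longleftrightarrow> (\<forall>f :: 'a \<Rightarrow> real. \<forall>x\<in>V.
      Gamma2 V E \<sigma> f f x \<ge> recip_dim N * (sgn_laplacian V E \<sigma> f x)\<^sup>2 + K * Gamma V E \<sigma> f f x)"

definition is_lap_eigenvalue :: "'a set \<Rightarrow> ('a \<Rightarrow> 'a \<Rightarrow> bool) \<Rightarrow> real \<Rightarrow> bool" where
  "is_lap_eigenvalue V E l \<longleftrightarrow> (\<exists>f :: 'a \<Rightarrow> real. (\<exists>x\<in>V. f x \<noteq> 0) \<and>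
      (\<forall>x\<in>V. - laplacian V E f x = l * f x))"

definition lambda_max :: "'a set \<Rightarrow> ('a \<Rightarrow> 'a \<Rightarrow> bool) \<Rightarrow> real" where
  "lambda_max V E = Max {l. is_lap_eigenvalue V E l}"

definition sqrt_dim :: "ereal \<Rightarrow> real" where
  "sqrt_dim N = (if N = \<infinity> then 1 else sqrt ((real_of_ereal N - 1) / real_of_ereal N))"

end

theory Submission
  imports Defs "HOL-Library.Function_Algebras"
begin

text \<open>
  Let f be an eigenfunction of -\<Delta> for its largest eigenvalue l. For the all-negative sign
  \<sigma>, \<Delta>^\<sigma> f = -(2 - l) f, and 2 d_x \<Gamma>^\<sigma>(f)(x) is the sum of (f x + f y)^2 over the neighbours
  y of x. Evaluating CD^\<sigma>(0,N) at a maximum point of \<Gamma>^\<sigma>(f) + (1 + s)(2 - l) f^2, with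
  s = sqrt((N - 1)/N), gives the gradient estimate \<Gamma>^\<sigma>(f) \<le> 2(1 + s)(2 - l) max f^2.

  Conversely, as G is not bipartite, every vertex x0 lies on a non-backtracking closed walk of
  odd length 2j + 1 \<le> 2D + 1. Along it the alternating sum of the edge values f x + f y
  telescopes to 2 f x0, and bounding consecutive edges in pairs gives
  4 (f x0)^2 \<le> (sqrt 2 D + 1)^2 K whenever all the neighbour sums of (f x + f y)^2 are at most K.
  At a vertex x0 where f^2 is maximal the two bounds combine to
  1 \<le> (sqrt 2 D + 1)^2 d (1 + s)(2 - l), and
  (sqrt 2 D + 1)^2 \<le> 4(D + 1)\<lceil>(D + 1)/2\<rceil>.
\<close>

lemma finite_ex_maximizer:
  fixes f :: "'a \<Rightarrow> 'b::linorder"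
  assumes "finite S" "S \<noteq> {}"
  obtains x where "x \<in> S" "\<forall>y\<in>S. f y \<le> f x"
  using Max_in[of "f ` S"] Max_ge[of "f ` S"] assms by fastforce

section \<open>Graph Laplacians\<close>

lemma nbrs_subset: "nbrs V E x \<subseteq> V"
  by (auto simp: nbrs_def)

lemma finite_nbrs: "simple_graph V E \<Longrightarrow> finite (nbrs V E x)"
  by (metis finite_subset nbrs_subset simple_graph_def)

lemma sum_nbrs_swap:
  assumes "simple_graph V E"
  shows "(\<Sum>x\<in>V. \<Sum>y\<in>nbrs V E x. h x y) = (\<Sum>x\<in>V. \<Sum>y\<in>nbrs V E x. h y x)"
proof -
  have fin: "finite V" and sym: "\<And>y. {x \<in> V. E x y} = {x \<in> V. E y x}"
    using assms by (auto simp: simple_graph_def)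
  have "(\<Sum>x\<in>V. \<Sum>y\<in>{y \<in> V. E x y}. h x y) = (\<Sum>y\<in>V. \<Sum>x\<in>{x \<in> V. E x y}. h x y)"
    by (rule sum.swap_restrict[OF fin fin])
  then show ?thesis
    unfolding nbrs_def sym .
qed

lemma deg_pos:
  assumes sg: "simple_graph V E" and "connected_graph V E" "\<not> bipartite V E" "x \<in> V"
  shows "deg V E x > 0"
proof -
  obtain u v where uv: "u \<in> V" "v \<in> V" "E u v"
    using \<open>\<not> bipartite V E\<close> unfolding bipartite_def by blast
  have "(x, u) \<in> (edge_rel V E)\<^sup>*"
    using assms uv by (auto simp: connected_graph_def)
  then obtain w where "(x, w) \<in> edge_rel V E"
    by (cases rule: converse_rtranclE) (use uv in \<open>auto simp: edge_rel_def\<close>)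
  then have "nbrs V E x \<noteq> {}"
    by (auto simp: edge_rel_def nbrs_def)
  then show ?thesis
    unfolding deg_def using finite_nbrs[OF sg] by (simp add: card_gt_0_iff)
qed

lemma sgn_laplacian_scale:
  "sgn_laplacian V E \<sigma> (\<lambda>z. c * f z) x = c * sgn_laplacian V E \<sigma> f x"
  unfolding sgn_laplacian_def by (simp add: sum_distrib_left algebra_simps)

lemma laplacian_add_scaled:
  "laplacian V E (\<lambda>z. g z + c * h z) x = laplacian V E g x + c * laplacian V E h x"
proof -
  have "(\<Sum>y\<in>nbrs V E x. 1 * (g y + c * h y) - (g x + c * h x))
      = (\<Sum>y\<in>nbrs V E x. 1 * g y - g x) + c * (\<Sum>y\<in>nbrs V E x. 1 * h y - h x)"
    by (simp add: sum.distrib[symmetric] sum_distrib_left algebra_simps)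
  then show ?thesis
    unfolding laplacian_def sgn_laplacian_def by (simp add: algebra_simps)
qed

lemma sgn_laplacian_cong:
  assumes "\<And>y. y \<in> V \<Longrightarrow> f y = g y" "x \<in> V"
  shows "sgn_laplacian V E \<sigma> f x = sgn_laplacian V E \<sigma> g x"
  unfolding sgn_laplacian_def using assms nbrs_subset[of V E x]
  by (intro arg_cong[where f="(*) _"] sum.cong) auto

lemma Gamma_cong_right:
  assumes "\<And>y. y \<in> V \<Longrightarrow> g y = h y" "x \<in> V"
  shows "Gamma V E \<sigma> f g x = Gamma V E \<sigma> f h x"
  unfolding Gamma_def laplacian_def
  using assms sgn_laplacian_cong[of V "\<lambda>z. f z * g z" "\<lambda>z. f z * h z"]
    sgn_laplacian_cong[of V g h] by simp

lemma Gamma_scale_right: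
  "Gamma V E \<sigma> f (\<lambda>z. c * f z) x = c * Gamma V E \<sigma> f f x"
proof -
  have "laplacian V E (\<lambda>z. f z * (c * f z)) x = c * laplacian V E (\<lambda>z. f z * f z) x"
    using sgn_laplacian_scale[of V E "\<lambda>_ _. 1" c "\<lambda>z. f z * f z"]
    unfolding laplacian_def by (simp add: mult.left_commute)
  then show ?thesis
    unfolding Gamma_def by (simp add: sgn_laplacian_scale algebra_simps)
qed

lemma laplacian_nonpos_at_max:
  assumes "x \<in> V" "\<forall>y\<in>V. g y \<le> g x"
  shows "laplacian V E g x \<le> 0"
proof -
  have "(\<Sum>y\<in>nbrs V E x. 1 * g y - g x) \<le> 0"
    using assms by (intro sum_nonpos) (auto simp: nbrs_def)
  then show ?thesis
    unfolding laplacian_def sgn_laplacian_def by (simp add: divide_nonpos_nonneg)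
qed

lemma deg_mult_laplacian:
  "deg V E x > 0 \<Longrightarrow> real (deg V E x) * laplacian V E f x = (\<Sum>y\<in>nbrs V E x. f y - f x)"
  unfolding laplacian_def sgn_laplacian_def by simp

lemma laplacian_self_adjoint:
  assumes sg: "simple_graph V E" and dp: "\<forall>x\<in>V. deg V E x > 0"
  shows "(\<Sum>x\<in>V. real (deg V E x) * u x * laplacian V E w x)
       = (\<Sum>x\<in>V. real (deg V E x) * laplacian V E u x * w x)"
proof -
  have expand: "real (deg V E x) * g x * laplacian V E h x = (\<Sum>y\<in>nbrs V E x. g x * h y - g x * h x)"
    if "x \<in> V" for x and g h :: "'a \<Rightarrow> real"
  proof -
    have "real (deg V E x) * g x * laplacian V E h x = g x * (real (deg V E x) * laplacian V E h x)"
      by (simp add: mult_ac)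
    then show ?thesis
      using dp that by (simp add: deg_mult_laplacian sum_distrib_left right_diff_distrib)
  qed
  have "(\<Sum>x\<in>V. real (deg V E x) * u x * laplacian V E w x)
      = (\<Sum>x\<in>V. \<Sum>y\<in>nbrs V E x. u x * w y - u x * w x)"
    by (intro sum.cong refl) (rule expand)
  also have "\<dots> = (\<Sum>x\<in>V. \<Sum>y\<in>nbrs V E x. w x * u y - w x * u x)"
    using sum_nbrs_swap[OF sg, of "\<lambda>x y. u x * w y"] by (simp add: sum_subtractf mult.commute)
  also have "\<dots> = (\<Sum>x\<in>V. real (deg V E x) * w x * laplacian V E u x)"
    by (intro sum.cong refl) (rule expand[symmetric])
  also have "\<dots> = (\<Sum>x\<in>V. real (deg V E x) * laplacian V E u x * w x)"
    by (simp add: mult_ac)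
  finally show ?thesis .
qed

section \<open>Finiteness of the spectrum\<close>

lemma sum_fun_apply: "(\<Sum>a\<in>A. F a) x = (\<Sum>a\<in>A. F a x)"
  for F :: "'b \<Rightarrow> 'a \<Rightarrow> real"
  by (induction A rule: infinite_finite_induct) auto

interpretation fun_space: vector_space "\<lambda>(c::real) (g::'a \<Rightarrow> real) x. c * g x"
  by unfold_locales (simp_all add: fun_eq_iff algebra_simps)

lemma orthogonal_functions_independent:
  fixes w :: "'a \<Rightarrow> real" and T :: "('a \<Rightarrow> real) set"
  assumes fin: "finite T"
    and orth: "\<And>u v. u \<in> T \<Longrightarrow> v \<in> T \<Longrightarrow> u \<noteq> v \<Longrightarrow> (\<Sum>x\<in>V. w x * u x * v x) = 0"
    and nondeg: "\<And>u. u \<in> T \<Longrightarrow> (\<Sum>x\<in>V. w x * u x * u x) \<noteq> 0"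
  shows "fun_space.independent T"
proof (rule fun_space.independent_if_scalars_zero[OF fin])
  fix c :: "('a \<Rightarrow> real) \<Rightarrow> real" and v
  assume comb: "(\<Sum>u\<in>T. (\<lambda>x. c u * u x)) = 0" and v: "v \<in> T"
  have "0 = (\<Sum>x\<in>V. w x * (\<Sum>u\<in>T. c u * u x) * v x)"
    using fun_cong[OF comb] by (simp add: sum_fun_apply)
  also have "\<dots> = (\<Sum>u\<in>T. c u * (\<Sum>x\<in>V. w x * u x * v x))"
    by (simp add: sum_distrib_left sum_distrib_right mult_ac sum.swap[of _ V])
  also have "\<dots> = c v * (\<Sum>x\<in>V. w x * v x * v x)"
    using orth v by (subst sum.remove[OF fin v]) (auto intro!: sum.neutral)
  finally show "c v = 0"
    using nondeg[OF v] by simp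
qed

lemma card_independent_functions_le:
  assumes finV: "finite V" and indep: "fun_space.independent T"
    and supp: "\<And>g x. g \<in> T \<Longrightarrow> x \<notin> V \<Longrightarrow> g x = 0"
  shows "card T \<le> card V"
proof -
  let ?B = "(\<lambda>v x. if x = v then 1 else 0 :: real) ` V"
  have span: "T \<subseteq> fun_space.span ?B"
  proof
    fix g assume "g \<in> T"
    then have "g = (\<Sum>v\<in>V. (\<lambda>x. g v * (if x = v then 1 else 0)))"
      using finV supp by (auto simp: fun_eq_iff sum_fun_apply if_distrib cong: if_cong)
    also have "\<dots> \<in> fun_space.span ?B"
      by (intro fun_space.span_sum fun_space.span_scale fun_space.span_base) auto
    finally show "g \<in> fun_space.span ?B" .
  qed
  have "card T \<le> card ?B"
    using fun_space.independent_span_bound[OF finite_imageI[OF finV] indep span] by (rule conjunct2)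
  also have "\<dots> \<le> card V"
    by (rule card_image_le[OF finV])
  finally show ?thesis .
qed

lemma weighted_square_sum_pos:
  fixes w u :: "'a \<Rightarrow> real"
  assumes "finite V" "\<forall>x\<in>V. w x > 0" "\<exists>x\<in>V. u x \<noteq> 0"
  shows "(\<Sum>x\<in>V. w x * u x * u x) > 0"
proof -
  obtain x where x: "x \<in> V" "u x \<noteq> 0"
    using assms(3) by blast
  have "0 < u x * u x"
    using x(2) not_real_square_gt_zero by blast
  then have "0 < w x * u x * u x"
    using assms(2) x(1) by (metis mult.assoc mult_pos_pos)
  moreover have "0 \<le> w y * u y * u y" if "y \<in> V" for y
    using assms(2) that by (metis less_imp_le mult.assoc mult_nonneg_nonneg zero_le_square)
  ultimately show ?thesis
    using assms(1) x by (intro sum_pos2[of V x]) auto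
qed

lemma lap_eigenfunction_supported:
  assumes "is_lap_eigenvalue V E l"
  shows "\<exists>f. (\<exists>x\<in>V. f x \<noteq> 0) \<and> (\<forall>x\<in>V. - laplacian V E f x = l * f x) \<and> (\<forall>x. x \<notin> V \<longrightarrow> f x = 0)"
proof -
  obtain f where f: "\<exists>x\<in>V. f x \<noteq> 0" "\<forall>x\<in>V. - laplacian V E f x = l * f x"
    using assms by (auto simp: is_lap_eigenvalue_def)
  let ?g = "\<lambda>x. if x \<in> V then f x else 0"
  have "laplacian V E ?g x = laplacian V E f x" if "x \<in> V" for x
    unfolding laplacian_def by (rule sgn_laplacian_cong) (use that in auto)
  then show ?thesis
    using f by (intro exI[of _ ?g]) auto
qed

lemma lap_eigenfunctions_orthogonal:
  assumes sg: "simple_graph V E" and dp: "\<forall>x\<in>V. deg V E x > 0"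
    and u: "\<forall>x\<in>V. - laplacian V E u x = l * u x"
    and v: "\<forall>x\<in>V. - laplacian V E v x = m * v x" and "l \<noteq> m"
  shows "(\<Sum>x\<in>V. real (deg V E x) * u x * v x) = 0"
proof -
  have scaled: "(\<Sum>x\<in>V. real (deg V E x) * g x * laplacian V E h x)
      = - k * (\<Sum>x\<in>V. real (deg V E x) * g x * h x)"
    if h: "\<forall>x\<in>V. - laplacian V E h x = k * h x" for g h k
  proof -
    have "laplacian V E h x = - (k * h x)" if "x \<in> V" for x
      using h that by (metis minus_minus)
    then show ?thesis
      by (simp add: sum_distrib_left sum_negf algebra_simps cong: sum.cong)
  qed
  have "- m * (\<Sum>x\<in>V. real (deg V E x) * u x * v x)
      = (\<Sum>x\<in>V. real (deg V E x) * u x * laplacian V E v x)"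
    using scaled[OF v] by simp
  also have "\<dots> = (\<Sum>x\<in>V. real (deg V E x) * laplacian V E u x * v x)"
    by (rule laplacian_self_adjoint[OF sg dp])
  also have "\<dots> = (\<Sum>x\<in>V. real (deg V E x) * v x * laplacian V E u x)"
    by (intro sum.cong refl) (simp add: mult_ac)
  also have "\<dots> = - l * (\<Sum>x\<in>V. real (deg V E x) * v x * u x)"
    by (rule scaled[OF u])
  also have "\<dots> = - l * (\<Sum>x\<in>V. real (deg V E x) * u x * v x)"
    by (intro arg_cong[where f="(*) _"] sum.cong refl) (simp add: mult_ac)
  finally show ?thesis
    using \<open>l \<noteq> m\<close> by simp
qed

text \<open>
  Eigenfunctions of distinct eigenvalues are orthogonal for the degree-weighted inner product,
  hence linearly independent.
\<close>
lemma card_lap_eigenvalues_le: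
  assumes sg: "simple_graph V E" and dp: "\<forall>x\<in>V. deg V E x > 0"
    and L: "L \<subseteq> {l. is_lap_eigenvalue V E l}" "finite L"
  shows "card L \<le> card V"
proof -
  have finV: "finite V"
    using sg by (simp add: simple_graph_def)
  obtain \<phi> where \<phi>: "\<And>l. is_lap_eigenvalue V E l \<Longrightarrow> (\<exists>x\<in>V. \<phi> l x \<noteq> 0)
      \<and> (\<forall>x\<in>V. - laplacian V E (\<phi> l) x = l * \<phi> l x) \<and> (\<forall>x. x \<notin> V \<longrightarrow> \<phi> l x = 0)"
    using lap_eigenfunction_supported by metis
  let ?ip = "\<lambda>u v. \<Sum>x\<in>V. real (deg V E x) * u x * v x"
  have orth: "?ip (\<phi> l) (\<phi> m) = 0" if "l \<in> L" "m \<in> L" "l \<noteq> m" for l m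
    using lap_eigenfunctions_orthogonal[OF sg dp] \<phi> L(1) that by blast
  have pos: "?ip (\<phi> l) (\<phi> l) > 0" if "l \<in> L" for l
  proof -
    have "is_lap_eigenvalue V E l"
      using L(1) that by blast
    then show ?thesis
      using weighted_square_sum_pos[OF finV] dp \<phi> by auto
  qed
  have inj: "inj_on \<phi> L"
    using orth pos by (intro inj_onI) (metis less_irrefl)
  have "fun_space.independent (\<phi> ` L)"
  proof (rule orthogonal_functions_independent[where w = "\<lambda>x. real (deg V E x)"])
    show "finite (\<phi> ` L)"
      using L(2) by simp
    show "?ip u v = 0" if "u \<in> \<phi> ` L" "v \<in> \<phi> ` L" "u \<noteq> v" for u v
      using that orth by auto
    show "?ip u u \<noteq> 0" if "u \<in> \<phi> ` L" for u
      using that pos by fastforce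
  qed
  then have "card (\<phi> ` L) \<le> card V"
    using L(1) \<phi> by (intro card_independent_functions_le[OF finV]) auto
  then show ?thesis
    using card_image[OF inj] by simp
qed

lemma finite_lap_eigenvalues:
  assumes "simple_graph V E" "\<forall>x\<in>V. deg V E x > 0"
  shows "finite {l. is_lap_eigenvalue V E l}"
  using card_lap_eigenvalues_le[OF assms] finite_if_finite_subsets_card_bdd by blast

lemma lap_eigenvalue_lambda_max:
  assumes "simple_graph V E" "V \<noteq> {}" "\<forall>x\<in>V. deg V E x > 0"
  shows "is_lap_eigenvalue V E (lambda_max V E)"
proof -
  have "is_lap_eigenvalue V E 0"
    unfolding is_lap_eigenvalue_def using assms(2)
    by (intro exI[of _ "\<lambda>_. 1"]) (auto simp: laplacian_def sgn_laplacian_def)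
  then show ?thesis
    unfolding lambda_max_def using Max_in finite_lap_eigenvalues[OF assms(1,3)] by blast
qed

section \<open>The all-negative sign\<close>

lemma sgn_laplacian_all_neg:
  "sgn_laplacian V E (\<lambda>_ _. -1) f x = - (\<Sum>y\<in>nbrs V E x. f x + f y) / real (deg V E x)"
  unfolding sgn_laplacian_def by (simp add: add.commute flip: sum_negf)

lemma Gamma_all_neg:
  "Gamma V E (\<lambda>_ _. -1) f f x = (\<Sum>y\<in>nbrs V E x. (f x + f y)^2) / (2 * real (deg V E x))"
proof -
  have "(\<Sum>y\<in>nbrs V E x. 1 * (f y * f y) - f x * f x) + 2 * f x * (\<Sum>y\<in>nbrs V E x. f x + f y)
      = (\<Sum>y\<in>nbrs V E x. (f x + f y)^2)"
    by (simp add: sum_distrib_left power2_eq_square algebra_simps flip: sum.distrib)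
  then show ?thesis
    unfolding Gamma_def laplacian_def sgn_laplacian_def[of _ _ "\<lambda>_ _. 1"] sgn_laplacian_all_neg
    by (cases "deg V E x = 0") (simp_all add: field_simps)
qed

lemma sum_nbrs_lap_eigenfunction:
  assumes "deg V E x > 0" "- laplacian V E f x = l * f x"
  shows "(\<Sum>y\<in>nbrs V E x. f x + f y) = (2 - l) * real (deg V E x) * f x"
proof -
  have "(\<Sum>y\<in>nbrs V E x. f x + f y) = (\<Sum>y\<in>nbrs V E x. f y - f x) + (\<Sum>y\<in>nbrs V E x. 2 * f x)"
    by (subst sum.distrib[symmetric]) (simp add: algebra_simps)
  also have "\<dots> = - l * real (deg V E x) * f x + 2 * real (deg V E x) * f x"
  proof -
    have "laplacian V E f x = - (l * f x)"
      using assms(2) by (metis minus_minus)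
    then show ?thesis
      using deg_mult_laplacian[OF assms(1), of f] by (simp add: deg_def algebra_simps)
  qed
  finally show ?thesis
    by (simp add: algebra_simps)
qed

lemma sgn_laplacian_all_neg_eigenfunction:
  assumes "deg V E x > 0" "- laplacian V E f x = l * f x"
  shows "sgn_laplacian V E (\<lambda>_ _. -1) f x = - (2 - l) * f x"
  using sum_nbrs_lap_eigenfunction[OF assms] assms(1)
  by (simp add: sgn_laplacian_all_neg) (simp add: algebra_simps)

lemma sum_nbrs_sum_square:
  fixes f :: "'a \<Rightarrow> real"
  assumes "simple_graph V E"
  shows "(\<Sum>x\<in>V. \<Sum>y\<in>nbrs V E x. (f x + f y)^2) = 2 * (\<Sum>x\<in>V. f x * (\<Sum>y\<in>nbrs V E x. f x + f y))"
proof -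
  have "(\<Sum>x\<in>V. \<Sum>y\<in>nbrs V E x. (f x + f y)^2)
      = (\<Sum>x\<in>V. \<Sum>y\<in>nbrs V E x. f x * (f x + f y)) + (\<Sum>x\<in>V. \<Sum>y\<in>nbrs V E x. f y * (f y + f x))"
  proof -
    have "(f x + f y)^2 = f x * (f x + f y) + f y * (f y + f x)" for x y
      by (simp add: power2_eq_square algebra_simps)
    then show ?thesis
      by (simp only: sum.distrib)
  qed
  also have "(\<Sum>x\<in>V. \<Sum>y\<in>nbrs V E x. f y * (f y + f x)) = (\<Sum>x\<in>V. \<Sum>y\<in>nbrs V E x. f x * (f x + f y))"
    by (rule sum_nbrs_swap[OF assms, symmetric])
  finally show ?thesis
    by (simp add: sum_distrib_left)
qed

lemma sum_nbrs_square_lap_eigenfunction: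
  assumes sg: "simple_graph V E" and dp: "\<forall>x\<in>V. deg V E x > 0"
    and f: "\<forall>x\<in>V. - laplacian V E f x = l * f x"
  shows "(\<Sum>x\<in>V. \<Sum>y\<in>nbrs V E x. (f x + f y)^2)
    = 2 * (2 - l) * (\<Sum>x\<in>V. real (deg V E x) * (f x)^2)"
proof -
  have "f x * (\<Sum>y\<in>nbrs V E x. f x + f y) = (2 - l) * (real (deg V E x) * (f x)^2)"
    if "x \<in> V" for x
    using sum_nbrs_lap_eigenfunction[of V E x f l] dp f that
    by (simp add: power2_eq_square mult_ac)
  then have "(\<Sum>x\<in>V. \<Sum>y\<in>nbrs V E x. (f x + f y)^2)
      = 2 * (\<Sum>x\<in>V. (2 - l) * (real (deg V E x) * (f x)^2))"
    unfolding sum_nbrs_sum_square[OF sg] by (intro arg_cong[where f="(*) 2"] sum.cong refl)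
  also have "\<dots> = 2 * (2 - l) * (\<Sum>x\<in>V. real (deg V E x) * (f x)^2)"
    by (simp only: sum_distrib_left mult.assoc)
  finally show ?thesis .
qed

section \<open>Odd closed walks\<close>

lemma sym_relpow:
  assumes "sym R"
  shows "sym (R ^^ n)"
proof (induction n)
  case 0
  then show ?case by (simp add: sym_Id)
next
  case (Suc n)
  show ?case
  proof (rule symI)
    fix a b
    assume "(a, b) \<in> R ^^ Suc n"
    then obtain c where "(a, c) \<in> R ^^ n" "(c, b) \<in> R"
      by (meson relpow_Suc_E)
    then show "(b, a) \<in> R ^^ Suc n"
      using Suc.IH assms by (meson relpow_Suc_I2 symD)
  qed
qed

lemma sym_edge_rel: "simple_graph V E \<Longrightarrow> sym (edge_rel V E)"
  by (auto simp: edge_rel_def simple_graph_def intro: symI)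

lemma edge_rel_nbrs:
  assumes "simple_graph V E" "(x, y) \<in> edge_rel V E"
  shows "x \<in> V" "y \<in> nbrs V E x" "x \<in> nbrs V E y"
  using assms by (auto simp: edge_rel_def nbrs_def simple_graph_def)

lemma walk_gdist:
  assumes "connected_graph V E" "x \<in> V" "y \<in> V"
  shows "(x, y) \<in> edge_rel V E ^^ gdist V E x y"
proof -
  obtain n where "(x, y) \<in> edge_rel V E ^^ n"
    using assms rtrancl_power by (fastforce simp: connected_graph_def)
  then show ?thesis
    unfolding gdist_def by (rule LeastI)
qed

lemma gdist_le_walk: "(x, y) \<in> edge_rel V E ^^ n \<Longrightarrow> gdist V E x y \<le> n"
  unfolding gdist_def by (rule Least_le)

lemma gdist_le_diameter:
  assumes "finite V" "x \<in> V" "y \<in> V"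
  shows "gdist V E x y \<le> diameter V E"
proof -
  have "{gdist V E x y | x y. x \<in> V \<and> y \<in> V} = (\<lambda>(x, y). gdist V E x y) ` (V \<times> V)"
    by auto
  then show ?thesis
    unfolding diameter_def using assms by (intro Max_ge) auto
qed

lemma odd_closed_walk:
  assumes sg: "simple_graph V E" and conn: "connected_graph V E" and nb: "\<not> bipartite V E"
    and x0: "x0 \<in> V"
  shows "\<exists>l. odd l \<and> l \<le> 2 * diameter V E + 1 \<and> (x0, x0) \<in> edge_rel V E ^^ l"
proof -
  let ?R = "edge_rel V E" and ?d = "gdist V E x0"
  \<comment> \<open>Colouring by the parity of the distance from x0 is not proper.\<close>
  have "bipartite V E" if "\<forall>y\<in>V. \<forall>z\<in>V. E y z \<longrightarrow> even (?d y) \<noteq> even (?d z)"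
    unfolding bipartite_def using that by (intro exI[of _ "\<lambda>x. even (?d x)"])
  then obtain y z where yz: "y \<in> V" "z \<in> V" "E y z" and parity: "even (?d y) = even (?d z)"
    using nb by blast
  have "(y, z) \<in> ?R" "(z, y) \<in> ?R"
    using yz sg by (auto simp: edge_rel_def simple_graph_def)
  then have "?d z \<le> Suc (?d y)" "?d y \<le> Suc (?d z)"
    using walk_gdist[OF conn x0] yz by (metis gdist_le_walk relpow_Suc_I)+
  moreover have "a = b" if "even a = even b" "b \<le> Suc a" "a \<le> Suc b" for a b :: nat
    using that by presburger
  ultimately have eq: "?d y = ?d z"
    using parity by blast
  have "(x0, z) \<in> ?R ^^ Suc (?d y)"
    using walk_gdist[OF conn x0 yz(1)] \<open>(y, z) \<in> ?R\<close> by (rule relpow_Suc_I)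
  moreover have "(z, x0) \<in> ?R ^^ ?d y"
    using walk_gdist[OF conn x0 yz(2)] eq sym_relpow[OF sym_edge_rel[OF sg]] by (metis symD)
  ultimately have "(x0, x0) \<in> ?R ^^ (Suc (?d y) + ?d y)"
    unfolding relpow_add by (rule relcompI)
  moreover have "?d y \<le> diameter V E"
    using sg x0 yz(1) by (intro gdist_le_diameter) (auto simp: simple_graph_def)
  ultimately show ?thesis
    by (intro exI[of _ "Suc (?d y) + ?d y"]) auto
qed

lemma closed_walk_remove_backtrack:
  assumes "p 0 = x0" "p l = x0" "\<forall>k<l. (p k, p (Suc k)) \<in> R"
    and "i + 2 \<le> l" "p i = p (i + 2)"
  shows "(x0, x0) \<in> R ^^ (l - 2)"
proof -
  define q where "q k = (if k \<le> i then p k else p (k + 2))" for k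
  have "q (l - 2) = x0"
  proof (cases "l - 2 \<le> i")
    case True
    then have "i = l - 2" "l = i + 2"
      using assms(4) by auto
    then show ?thesis
      using assms(2,5) by (simp add: q_def)
  next
    case False
    moreover have "l - 2 + 2 = l"
      using assms(4) by simp
    ultimately show ?thesis
      using assms(2) by (simp add: q_def)
  qed
  moreover have "q 0 = x0"
    using assms(1) by (simp add: q_def)
  moreover have "(q k, q (Suc k)) \<in> R" if "k < l - 2" for k
    using assms(3) assms(4,5) that
    by (cases "k < i"; cases "k = i") (auto simp: q_def)
  ultimately show ?thesis
    unfolding relpow_fun_conv by blast
qed

lemma odd_closed_walk_non_backtracking:
  assumes "odd l" "(x0, x0) \<in> R ^^ l"
  obtains l' p where "odd l'" "l' \<le> l" "p 0 = x0" "p l' = x0" "\<forall>k<l'. (p k, p (Suc k)) \<in> R"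
    "\<forall>i. i + 2 \<le> l' \<longrightarrow> p i \<noteq> p (i + 2)"
proof -
  let ?odd_walk = "\<lambda>l. odd l \<and> (x0, x0) \<in> R ^^ l"
  define l' where "l' = (LEAST l. ?odd_walk l)"
  have walk: "?odd_walk l'"
    unfolding l'_def by (rule LeastI[of ?odd_walk l]) (use assms in simp)
  have "l' \<le> l"
    unfolding l'_def by (rule Least_le) (use assms in simp)
  obtain p where p: "p 0 = x0" "p l' = x0" "\<forall>k<l'. (p k, p (Suc k)) \<in> R"
    using walk unfolding relpow_fun_conv by blast
  have "p i \<noteq> p (i + 2)" if "i + 2 \<le> l'" for i
  proof
    assume "p i = p (i + 2)"
    then have "?odd_walk (l' - 2)"
      using closed_walk_remove_backtrack[OF p that] walk that by auto
    moreover have "l' - 2 < l'"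
      using that by simp
    ultimately show False
      unfolding l'_def using not_less_Least by blast
  qed
  then show ?thesis
    using that walk \<open>l' \<le> l\<close> p by blast
qed

lemma alternating_edge_sum:
  fixes f :: "'a \<Rightarrow> real"
  shows "(\<Sum>k<n. (-1)^k * (f (p k) + f (p (Suc k)))) = f (p 0) - (-1)^n * f (p n)"
  by (induction n) (simp_all add: algebra_simps)

lemma abs_edge_sum_le:
  fixes f :: "'a \<Rightarrow> real"
  assumes "simple_graph V E" "u \<in> nbrs V E v" "(\<Sum>y\<in>nbrs V E v. (f v + f y)^2) \<le> K"
  shows "\<bar>f v + f u\<bar> \<le> sqrt K"
proof -
  have "(f v + f u)^2 \<le> (\<Sum>y\<in>nbrs V E v. (f v + f y)^2)"
    using assms(2) finite_nbrs[OF assms(1)] by (intro member_le_sum) auto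
  then show ?thesis
    using assms(3) by (intro real_le_rsqrt) simp
qed

lemma abs_edge_sum_pair_le:
  fixes f :: "'a \<Rightarrow> real"
  assumes "simple_graph V E" "u \<in> nbrs V E v" "w \<in> nbrs V E v" "u \<noteq> w"
    and "(\<Sum>y\<in>nbrs V E v. (f v + f y)^2) \<le> K"
  shows "\<bar>f v + f u\<bar> + \<bar>f v + f w\<bar> \<le> sqrt (2 * K)"
proof -
  have square_le: "(\<bar>a\<bar> + \<bar>b\<bar>)^2 \<le> 2 * (a^2 + b^2)" for a b :: real
  proof -
    have "0 \<le> (\<bar>a\<bar> - \<bar>b\<bar>)^2"
      by simp
    then show ?thesis
      by (simp add: power2_eq_square algebra_simps abs_mult_self)
  qed
  have "(f v + f u)^2 + (f v + f w)^2 = (\<Sum>y\<in>{u, w}. (f v + f y)^2)"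
    using assms(4) by simp
  also have "\<dots> \<le> (\<Sum>y\<in>nbrs V E v. (f v + f y)^2)"
    using assms(2,3) finite_nbrs[OF assms(1)] by (intro sum_mono2) auto
  finally have "(f v + f u)^2 + (f v + f w)^2 \<le> K"
    using assms(5) by linarith
  then have "2 * ((f v + f u)^2 + (f v + f w)^2) \<le> 2 * K"
    by simp
  then have "(\<bar>f v + f u\<bar> + \<bar>f v + f w\<bar>)^2 \<le> 2 * K"
    using square_le by (rule order_trans[rotated])
  then show ?thesis
    by (rule real_le_rsqrt)
qed

lemma non_backtracking_closed_walk_bound:
  fixes f :: "'a \<Rightarrow> real"
  assumes sg: "simple_graph V E"
    and K: "\<forall>x\<in>V. (\<Sum>y\<in>nbrs V E x. (f x + f y)^2) \<le> K"
    and walk: "p 0 = x0" "p (2 * j + 1) = x0" "\<forall>k<2 * j + 1. (p k, p (Suc k)) \<in> edge_rel V E"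
    and no_backtrack: "\<forall>i. i + 2 \<le> 2 * j + 1 \<longrightarrow> p i \<noteq> p (i + 2)"
  shows "2 * \<bar>f x0\<bar> \<le> (real j * sqrt 2 + 1) * sqrt K"
proof -
  \<comment> \<open>The alternating sum of the edge values telescopes; consecutive edges share a vertex.\<close>
  define e where "e k = f (p k) + f (p (Suc k))" for k
  have step: "p k \<in> V" "p (Suc k) \<in> nbrs V E (p k)" "p k \<in> nbrs V E (p (Suc k))"
    if "k < 2 * j + 1" for k
    using edge_rel_nbrs[OF sg] walk(3) that by blast+
  have "(\<Sum>k<2 * j + 1. (-1)^k * e k) = 2 * f x0"
    using alternating_edge_sum[where f = f and p = p and n = "2 * j + 1"] walk(1,2)
    unfolding e_def by (simp del: sum.lessThan_Suc)
  then have "2 * \<bar>f x0\<bar> = \<bar>\<Sum>k<2 * j + 1. (-1)^k * e k\<bar>"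
    by (simp add: abs_mult)
  also have "\<dots> \<le> (\<Sum>k<2 * j + 1. \<bar>e k\<bar>)"
    by (rule order_trans[OF sum_abs]) (simp add: abs_mult)
  also have "\<dots> = (\<Sum>i<j. \<bar>e (2 * i)\<bar> + \<bar>e (2 * i + 1)\<bar>) + \<bar>e (2 * j)\<bar>"
    using sum_split_even_odd[where f = "\<lambda>k. \<bar>e k\<bar>" and g = "\<lambda>k. \<bar>e k\<bar>" and n = j] by (simp add: sum.distrib)
  also have "\<dots> \<le> real j * sqrt (2 * K) + sqrt K"
  proof (rule add_mono)
    have "\<bar>e (2 * i)\<bar> + \<bar>e (2 * i + 1)\<bar> \<le> sqrt (2 * K)" if "i < j" for i
    proof -
      let ?u = "p (2 * i)" and ?v = "p (2 * i + 1)" and ?w = "p (2 * i + 2)"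
      have "?u \<in> nbrs V E ?v" "?w \<in> nbrs V E ?v" "?v \<in> V" "?u \<noteq> ?w"
        using step[of "2 * i"] step[of "2 * i + 1"] no_backtrack that by auto
      then have "\<bar>f ?v + f ?u\<bar> + \<bar>f ?v + f ?w\<bar> \<le> sqrt (2 * K)"
        using K by (intro abs_edge_sum_pair_le[OF sg]) auto
      then show ?thesis
        unfolding e_def by (simp add: add.commute)
    qed
    then have "(\<Sum>i<j. \<bar>e (2 * i)\<bar> + \<bar>e (2 * i + 1)\<bar>) \<le> real (card {..<j}) * sqrt (2 * K)"
      by (intro sum_bounded_above) auto
    then show "(\<Sum>i<j. \<bar>e (2 * i)\<bar> + \<bar>e (2 * i + 1)\<bar>) \<le> real j * sqrt (2 * K)"
      by simp
  next
    show "\<bar>e (2 * j)\<bar> \<le> sqrt K"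
      using step[of "2 * j"] abs_edge_sum_le[OF sg] K unfolding e_def by simp
  qed
  also have "\<dots> = (real j * sqrt 2 + 1) * sqrt K"
    by (simp add: real_sqrt_mult algebra_simps)
  finally show ?thesis .
qed

lemma vertex_bound_by_edge_sums:
  fixes f :: "'a \<Rightarrow> real"
  assumes "simple_graph V E" "connected_graph V E" "\<not> bipartite V E" "x0 \<in> V"
    and K: "\<forall>x\<in>V. (\<Sum>y\<in>nbrs V E x. (f x + f y)^2) \<le> K"
  shows "4 * (f x0)^2 \<le> (sqrt 2 * real (diameter V E) + 1)^2 * K"
proof -
  obtain l where l: "odd l" "l \<le> 2 * diameter V E + 1" "(x0, x0) \<in> edge_rel V E ^^ l"
    using odd_closed_walk[OF assms(1-4)] by blast
  obtain l' p where walk: "odd l'" "l' \<le> l" "p 0 = x0" "p l' = x0"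
      "\<forall>k<l'. (p k, p (Suc k)) \<in> edge_rel V E" "\<forall>i. i + 2 \<le> l' \<longrightarrow> p i \<noteq> p (i + 2)"
    using odd_closed_walk_non_backtracking[OF l(1,3)] by blast
  obtain j where j: "l' = 2 * j + 1"
    using walk(1) oddE by blast
  have "0 \<le> K"
    using K assms(4) sum_nonneg[of "nbrs V E x0" "\<lambda>y. (f x0 + f y)^2"] by force
  have "2 * \<bar>f x0\<bar> \<le> (real j * sqrt 2 + 1) * sqrt K"
    using non_backtracking_closed_walk_bound[OF assms(1) K] walk j by simp
  also have "\<dots> \<le> (sqrt 2 * real (diameter V E) + 1) * sqrt K"
    using j walk(2) l(2) \<open>0 \<le> K\<close> by (intro mult_right_mono) (auto simp: mult.commute)
  finally have "(2 * \<bar>f x0\<bar>)^2 \<le> ((sqrt 2 * real (diameter V E) + 1) * sqrt K)^2"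
    by (rule power_mono) simp
  then show ?thesis
    using \<open>0 \<le> K\<close> by (simp add: power_mult_distrib)
qed

section \<open>The gradient estimate\<close>

lemma sqrt_dim_pos_square:
  assumes "N > 1"
  shows "sqrt_dim N > 0" "(sqrt_dim N)^2 = 1 - recip_dim N"
proof -
  have "sqrt_dim N > 0 \<and> (sqrt_dim N)^2 = 1 - recip_dim N"
  proof (cases N)
    case (real n)
    then have "(n - 1) / n > 0" "(n - 1) / n = 1 - 1 / n"
      using assms by (simp_all add: field_simps)
    then show ?thesis
      using real by (simp add: sqrt_dim_def recip_dim_def)
  next
    case PInf
    then show ?thesis
      by (simp add: sqrt_dim_def recip_dim_def)
  next
    case MInf
    then show ?thesis
      using assms by simp
  qed
  then show "sqrt_dim N > 0" "(sqrt_dim N)^2 = 1 - recip_dim N"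
    by auto
qed

lemma CD_zero_eigenfunction:
  assumes "CD V E \<sigma> 0 N" and eig: "\<forall>x\<in>V. sgn_laplacian V E \<sigma> f x = - lam * f x" and "x \<in> V"
  shows "laplacian V E (Gamma V E \<sigma> f f) x
    \<ge> 2 * recip_dim N * lam^2 * (f x)^2 - 2 * lam * Gamma V E \<sigma> f f x"
proof -
  have "Gamma V E \<sigma> f (sgn_laplacian V E \<sigma> f) x = Gamma V E \<sigma> f (\<lambda>z. - lam * f z) x"
    using eig \<open>x \<in> V\<close> by (intro Gamma_cong_right) auto
  also have "\<dots> = - lam * Gamma V E \<sigma> f f x"
    by (rule Gamma_scale_right)
  finally have "Gamma2 V E \<sigma> f f x = laplacian V E (Gamma V E \<sigma> f f) x / 2 + lam * Gamma V E \<sigma> f f x"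
    unfolding Gamma2_def by simp
  moreover have "Gamma2 V E \<sigma> f f x \<ge> recip_dim N * (sgn_laplacian V E \<sigma> f x)^2 + 0 * Gamma V E \<sigma> f f x"
    using assms(1) \<open>x \<in> V\<close> unfolding CD_def by blast
  ultimately show ?thesis
    using eig \<open>x \<in> V\<close> by (simp add: power_mult_distrib algebra_simps)
qed

lemma CD_zero_eigenfunction_gradient_bound:
  assumes sg: "simple_graph V E" and cd: "CD V E \<sigma> 0 N" and "N > 1" and "lam > 0"
    and eig: "\<forall>x\<in>V. sgn_laplacian V E \<sigma> f x = - lam * f x"
    and M: "\<forall>y\<in>V. (f y)^2 \<le> M" and "x \<in> V"
  shows "Gamma V E \<sigma> f f x \<le> 2 * (1 + sqrt_dim N) * lam * M"
proof -
  define s where "s = sqrt_dim N"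
  have "s > 0" and r: "recip_dim N = 1 - s^2"
    using sqrt_dim_pos_square[OF \<open>N > 1\<close>] by (simp_all add: s_def)
  let ?\<Gamma> = "Gamma V E \<sigma> f f"
  define G where "G z = ?\<Gamma> z + (1 + s) * lam * (f z * f z)" for z
  obtain x1 where x1: "x1 \<in> V" "\<forall>y\<in>V. G y \<le> G x1"
    using finite_ex_maximizer[of V G] sg \<open>x \<in> V\<close> by (auto simp: simple_graph_def)
  have "laplacian V E (\<lambda>z. f z * f z) x1 = 2 * ?\<Gamma> x1 - 2 * lam * (f x1)^2"
    using eig x1(1) unfolding Gamma_def by (simp add: power2_eq_square field_simps)
  then have "laplacian V E ?\<Gamma> x1 + (1 + s) * lam * (2 * ?\<Gamma> x1 - 2 * lam * (f x1)^2) \<le> 0"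
    using laplacian_nonpos_at_max[OF x1, where E = E] unfolding G_def laplacian_add_scaled by simp
  \<comment> \<open>With recip_dim N = 1 - s^2 the CD inequality at the maximum point factors.\<close>
  moreover have "2 * (1 - s^2) * lam^2 * (f x1)^2 - 2 * lam * ?\<Gamma> x1
      + (1 + s) * lam * (2 * ?\<Gamma> x1 - 2 * lam * (f x1)^2)
      = 2 * lam * s * (?\<Gamma> x1 - (1 + s) * lam * (f x1)^2)"
    by (simp add: power2_eq_square algebra_simps)
  ultimately have "2 * lam * s * (?\<Gamma> x1 - (1 + s) * lam * (f x1)^2) \<le> 0"
    using CD_zero_eigenfunction[OF cd eig x1(1)] unfolding r by linarith
  then have max_bound: "?\<Gamma> x1 \<le> (1 + s) * lam * (f x1)^2"
    using \<open>lam > 0\<close> \<open>s > 0\<close> by (simp add: mult_le_0_iff)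
  have "?\<Gamma> x \<le> G x"
    unfolding G_def using \<open>lam > 0\<close> \<open>s > 0\<close> by simp
  also have "\<dots> \<le> G x1"
    using x1 \<open>x \<in> V\<close> by blast
  also have "\<dots> \<le> 2 * (1 + s) * lam * (f x1)^2"
    using max_bound unfolding G_def by (simp add: power2_eq_square algebra_simps)
  also have "\<dots> \<le> 2 * (1 + s) * lam * M"
    using M x1(1) \<open>lam > 0\<close> \<open>s > 0\<close> by simp
  finally show ?thesis
    unfolding s_def .
qed

lemma lap_eigenvalue_less_two:
  assumes sg: "simple_graph V E" and conn: "connected_graph V E" and nb: "\<not> bipartite V E"
    and "is_lap_eigenvalue V E l"
  shows "l < 2"
proof (rule ccontr)
  assume "\<not> l < 2"
  obtain f where f: "\<exists>x\<in>V. f x \<noteq> 0" "\<forall>x\<in>V. - laplacian V E f x = l * f x"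
    using assms(4) by (auto simp: is_lap_eigenvalue_def)
  have "(\<Sum>x\<in>V. \<Sum>y\<in>nbrs V E x. (f x + f y)^2)
      = 2 * (2 - l) * (\<Sum>x\<in>V. real (deg V E x) * (f x)^2)"
    using sum_nbrs_square_lap_eigenfunction[OF sg] deg_pos[OF sg conn nb] f(2) by blast
  also have "\<dots> \<le> 0"
    using \<open>\<not> l < 2\<close> by (intro mult_nonpos_nonneg[of "2 * (2 - l)"] sum_nonneg) auto
  finally have total: "(\<Sum>x\<in>V. \<Sum>y\<in>nbrs V E x. (f x + f y)^2) \<le> 0" .
  have edge_sums: "\<forall>x\<in>V. (\<Sum>y\<in>nbrs V E x. (f x + f y)^2) \<le> 0"
  proof
    fix x
    assume "x \<in> V"
    then have "(\<Sum>y\<in>nbrs V E x. (f x + f y)^2) \<le> (\<Sum>x\<in>V. \<Sum>y\<in>nbrs V E x. (f x + f y)^2)"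
      using sg by (intro member_le_sum) (auto simp: simple_graph_def intro: sum_nonneg)
    with total show "(\<Sum>y\<in>nbrs V E x. (f x + f y)^2) \<le> 0"
      by linarith
  qed
  have "4 * (f x)^2 \<le> 0" if "x \<in> V" for x
    using vertex_bound_by_edge_sums[OF sg conn nb that edge_sums] by simp
  then show False
    using f(1) by (metis not_real_square_gt_zero mult_pos_pos power2_eq_square zero_less_numeral not_le)
qed

lemma CD_all_neg_edge_sum_bound:
  assumes sg: "simple_graph V E" and conn: "connected_graph V E" and nb: "\<not> bipartite V E"
    and "N > 1" and cd: "CD V E (\<lambda>_ _. -1) 0 N"
    and f: "\<forall>x\<in>V. - laplacian V E f x = l * f x" and "l < 2"
    and M: "\<forall>y\<in>V. (f y)^2 \<le> M" and "x \<in> V"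
  shows "(\<Sum>y\<in>nbrs V E x. (f x + f y)^2) \<le> 4 * real (max_degree V E) * (1 + sqrt_dim N) * (2 - l) * M"
proof -
  let ?B = "2 * (1 + sqrt_dim N) * (2 - l) * M"
  have "0 \<le> M"
    using M \<open>x \<in> V\<close> by (metis zero_le_power2 order_trans)
  then have "0 \<le> ?B"
    using \<open>l < 2\<close> sqrt_dim_pos_square[OF \<open>N > 1\<close>] by (intro mult_nonneg_nonneg) auto
  have sgn_f: "\<forall>x\<in>V. sgn_laplacian V E (\<lambda>_ _. -1) f x = - (2 - l) * f x"
    using f by (intro ballI sgn_laplacian_all_neg_eigenfunction deg_pos[OF sg conn nb]) auto
  have "(\<Sum>y\<in>nbrs V E x. (f x + f y)^2) = 2 * real (deg V E x) * Gamma V E (\<lambda>_ _. -1) f f x"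
    using deg_pos[OF sg conn nb \<open>x \<in> V\<close>] unfolding Gamma_all_neg by simp
  also have "\<dots> \<le> 2 * real (deg V E x) * ?B"
    using M \<open>x \<in> V\<close> \<open>l < 2\<close>
    by (intro mult_left_mono CD_zero_eigenfunction_gradient_bound[OF sg cd \<open>N > 1\<close> _ sgn_f]) auto
  also have "\<dots> \<le> 2 * real (max_degree V E) * ?B"
    unfolding max_degree_def using sg \<open>x \<in> V\<close> \<open>0 \<le> ?B\<close>
    by (intro mult_right_mono) (auto simp: simple_graph_def)
  also have "\<dots> = 4 * real (max_degree V E) * (1 + sqrt_dim N) * (2 - l) * M"
    by (simp add: algebra_simps)
  finally show ?thesis .
qed

lemma CD_all_neg_eigenvalue_gap:
  assumes sg: "simple_graph V E" and conn: "connected_graph V E" and nb: "\<not> bipartite V E"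
    and "N > 1" and cd: "CD V E (\<lambda>_ _. -1) 0 N" and eig: "is_lap_eigenvalue V E l"
  shows "1 \<le> (sqrt 2 * real (diameter V E) + 1)^2 * real (max_degree V E) * (1 + sqrt_dim N) * (2 - l)"
proof -
  define K where "K = 4 * real (max_degree V E) * (1 + sqrt_dim N) * (2 - l)"
  have finV: "finite V" and "V \<noteq> {}"
    using sg conn by (auto simp: simple_graph_def connected_graph_def)
  obtain f where f: "\<exists>x\<in>V. f x \<noteq> 0" "\<forall>x\<in>V. - laplacian V E f x = l * f x"
    using eig by (auto simp: is_lap_eigenvalue_def)
  obtain x0 where x0: "x0 \<in> V" "\<forall>y\<in>V. (f y)^2 \<le> (f x0)^2"
    using finite_ex_maximizer[OF finV \<open>V \<noteq> {}\<close>, of "\<lambda>y. (f y)^2"] by blast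
  have "(f x0)^2 > 0"
    using f(1) x0(2) by (metis order.strict_trans2 zero_less_power2)
  have "\<forall>x\<in>V. (\<Sum>y\<in>nbrs V E x. (f x + f y)^2) \<le> K * (f x0)^2"
    using CD_all_neg_edge_sum_bound[OF sg conn nb \<open>N > 1\<close> cd f(2)] x0(2)
      lap_eigenvalue_less_two[OF sg conn nb eig] unfolding K_def by blast
  then have "4 * (f x0)^2 \<le> (sqrt 2 * real (diameter V E) + 1)^2 * (K * (f x0)^2)"
    by (rule vertex_bound_by_edge_sums[OF sg conn nb x0(1)])
  then have "(4 * (f x0)^2) * 1 \<le> (4 * (f x0)^2) * ((sqrt 2 * real (diameter V E) + 1)^2
      * real (max_degree V E) * (1 + sqrt_dim N) * (2 - l))"
    by (simp only: K_def mult_ac mult_1_right)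
  then show ?thesis
    by (rule mult_left_le_imp_le) (use \<open>(f x0)^2 > 0\<close> in simp)
qed

lemma diameter_factor_bound:
  fixes D :: real
  assumes "D \<ge> 0"
  shows "(sqrt 2 * D + 1)^2 \<le> 4 * (D + 1) * real_of_int \<lceil>(D + 1) / 2\<rceil>"
proof -
  have "sqrt 2 * D \<le> 2 * D"
    using assms by (intro mult_right_mono) (auto intro: real_le_lsqrt)
  then have "(sqrt 2 * D + 1)^2 \<le> 2 * (D + 1)^2"
    by (simp add: power2_eq_square algebra_simps)
  also have "\<dots> = 4 * (D + 1) * ((D + 1) / 2)"
    by (simp add: power2_eq_square)
  also have "\<dots> \<le> 4 * (D + 1) * real_of_int \<lceil>(D + 1) / 2\<rceil>"
    using assms by (intro mult_left_mono) auto
  finally show ?thesis .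
qed

theorem corollary3p14:
  fixes V :: "'a set" and E :: "'a \<Rightarrow> 'a \<Rightarrow> bool" and N :: ereal
  assumes "simple_graph V E" and "connected_graph V E" and "\<not> bipartite V E"
    and "N > 1" and "CD V E (\<lambda>_ _. -1) 0 N"
  shows "2 - lambda_max V E \<ge>
    1 / (4 * (1 + sqrt_dim N)) *
    (1 / (real (max_degree V E) * (real (diameter V E) + 1)
          * real_of_int \<lceil>(real (diameter V E) + 1) / 2\<rceil>))"
proof -
  let ?l = "lambda_max V E" and ?s = "sqrt_dim N"
  let ?d = "real (max_degree V E)" and ?D = "real (diameter V E)"
  define P where "P = 4 * (1 + ?s) * (?d * (?D + 1) * real_of_int \<lceil>(?D + 1) / 2\<rceil>)"
  have "V \<noteq> {}"
    using assms(2) by (simp add: connected_graph_def)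
  then have eig: "is_lap_eigenvalue V E ?l"
    using lap_eigenvalue_lambda_max[OF assms(1)] deg_pos[OF assms(1-3)] by blast
  have "2 - ?l > 0" "?s > 0"
    using lap_eigenvalue_less_two[OF assms(1-3) eig] sqrt_dim_pos_square[OF assms(4)] by auto
  have "1 \<le> (sqrt 2 * ?D + 1)^2 * (?d * (1 + ?s) * (2 - ?l))"
    using CD_all_neg_eigenvalue_gap[OF assms(1-5) eig] by (simp add: mult.assoc)
  also have "\<dots> \<le> 4 * (?D + 1) * real_of_int \<lceil>(?D + 1) / 2\<rceil> * (?d * (1 + ?s) * (2 - ?l))"
    using \<open>2 - ?l > 0\<close> \<open>?s > 0\<close> by (intro mult_right_mono diameter_factor_bound) auto
  also have "\<dots> = P * (2 - ?l)"
    unfolding P_def by (simp only: mult_ac)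
  finally have "1 \<le> P * (2 - ?l)" .
  moreover have "P > 0"
    using \<open>1 \<le> P * (2 - ?l)\<close> \<open>2 - ?l > 0\<close> by (intro zero_less_mult_pos2[of P "2 - ?l"]) auto
  ultimately show ?thesis
    by (simp add: P_def divide_le_eq mult.commute)
qed

end
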